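(* Let $(m_j)_{j=1}^{\infty}$ be a strictly increasing sequence of positive integers with $m_{j+1}\ge q\,m_j$ for all $j$, where $q\ge 2$. Let $A_j>0$, $B_j\in\mathbb{C}$ with $A_j^2-|B_j|^2=1$. For $N\in\mathbb{N}$ define trigonometric polynomials $a_N,b_N$ by $$\begin{bmatrix} a_N(t) & b_N(t)\\ \overline{b_N(t)} & \overline{a_N(t)}\end{bmatrix}=\prod_{j=1}^{N}\begin{bmatrix} A_j & B_j e^{2\pi i m_j t}\\ \overline{B_j}e^{-2\pi i m_j t} & A_j\end{bmatrix}$$ (factors in increasing order of $j$ from left to right). Then (a) $\displaystyle\int_{\mathbb{T}}\big(|a_N(t)|^2+|b_N(t)|^2\big)\,dt=\prod_{j=1}^{N}(A_j^2+|B_j|^2)$; (b) $\displaystyle\int_{\mathbb{T}}\big(|a_N(t)-A_1\cdots A_N|^2+|b_N(t)|^2\big)\,dt=\prod_{j=1}^{N}(A_j^2+|B_j|^2)-\prod_{j=1}^{N}A_j^2$.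
   Context: $\mathbb{T}=\mathbb{R}/\mathbb{Z}$ with Lebesgue measure. *)

theory Defs
  imports "HOL-Analysis.Analysis"
begin

definition factor_mat :: "real \<Rightarrow> complex \<Rightarrow> nat \<Rightarrow> real \<Rightarrow> complex^2^2" where
  "factor_mat A B m t =
     (\<chi> i j. if i = 1 then (if j = 1 then complex_of_real A
                              else B * exp (2 * pi * \<i> * of_nat m * of_real t))
             else (if j = 1 then cnj B * exp (- (2 * pi * \<i> * of_nat m * of_real t))
                   else complex_of_real A))"

fun prod_mat :: "(nat \<Rightarrow> real) \<Rightarrow> (nat \<Rightarrow> complex) \<Rightarrow> (nat \<Rightarrow> nat) \<Rightarrow> nat \<Rightarrow> real \<Rightarrow> complex^2^2" where
  "prod_mat A B m 0 t = mat 1"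
| "prod_mat A B m (Suc N) t = prod_mat A B m N t ** factor_mat (A (Suc N)) (B (Suc N)) (m (Suc N)) t"

definition a_poly :: "(nat \<Rightarrow> real) \<Rightarrow> (nat \<Rightarrow> complex) \<Rightarrow> (nat \<Rightarrow> nat) \<Rightarrow> nat \<Rightarrow> real \<Rightarrow> complex" where
  "a_poly A B m N t = prod_mat A B m N t $ 1 $ 1"

definition b_poly :: "(nat \<Rightarrow> real) \<Rightarrow> (nat \<Rightarrow> complex) \<Rightarrow> (nat \<Rightarrow> nat) \<Rightarrow> nat \<Rightarrow> real \<Rightarrow> complex" where
  "b_poly A B m N t = prod_mat A B m N t $ 1 $ 2"

end

theory Submission
  imports Defs
begin

(* Multiplying by the j-th factor maps (a, b) to (A_j a + conj(B_j) e(-m_j) b, B_j e(m_j) a + A_j b),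
   where e(k) t = exp(2 pi i k t), so that
     |a'|^2 + |b'|^2 = (A_j^2 + |B_j|^2) (|a|^2 + |b|^2) + 4 A_j Re (B_j e(m_j) a conj(b)).
   By induction a_N has frequencies in (-m_N, 0] and b_N in [1, m_N]; the cross term then has
   only frequencies >= m_j - 2 m_(j-1) + 1 > 0 and integrates to 0, which gives (a).
   The same spectral bounds show that the mean of a_N is A_1 ... A_N, and (b) follows by
   expanding |a_N - A_1 ... A_N|^2. *)

definition circle_char :: "int \<Rightarrow> real \<Rightarrow> complex" where
  "circle_char k t = exp (2 * pi * \<i> * of_int k * of_real t)"

lemma circle_char_add: "circle_char k t * circle_char l t = circle_char (k + l) t"
  by (simp add: circle_char_def algebra_simps flip: exp_add)

lemma cnj_circle_char: "cnj (circle_char k t) = circle_char (- k) t"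
  by (simp add: circle_char_def exp_cnj)

lemma circle_char_has_integral_0:
  assumes "k \<noteq> 0"
  shows "(circle_char k has_integral 0) {0..1}"
proof -
  define c where "c = 2 * pi * \<i> * of_int k"
  have "c \<noteq> 0" using assms by (simp add: c_def)
  then have "((\<lambda>x. exp (c * of_real x) / c) has_vector_derivative exp (c * of_real t))
      (at t within {0..1})" for t
    by (intro derivative_eq_intros has_complex_derivative_imp_has_vector_derivative [unfolded o_def] | simp)+
  then have "((\<lambda>t. exp (c * of_real t)) has_integral
      exp (c * of_real 1) / c - exp (c * of_real 0) / c) {0..1}"
    by (intro fundamental_theorem_of_calculus) auto
  moreover have "exp c = 1"
    by (simp add: c_def mult_ac)
  moreover have "circle_char k = (\<lambda>t. exp (c * of_real t))"
    by (simp add: fun_eq_iff circle_char_def c_def)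
  ultimately show ?thesis
    by simp
qed

inductive trig_poly_in :: "int set \<Rightarrow> (real \<Rightarrow> complex) \<Rightarrow> bool" for S where
  zero: "trig_poly_in S (\<lambda>t. 0)"
| char: "k \<in> S \<Longrightarrow> trig_poly_in S (\<lambda>t. c * circle_char k t)"
| add: "trig_poly_in S f \<Longrightarrow> trig_poly_in S g \<Longrightarrow> trig_poly_in S (\<lambda>t. f t + g t)"

lemma trig_poly_in_mono: "trig_poly_in S f \<Longrightarrow> S \<subseteq> T \<Longrightarrow> trig_poly_in T f"
  by (induction rule: trig_poly_in.induct) (auto intro: trig_poly_in.intros)

lemma trig_poly_in_cnj: "trig_poly_in S f \<Longrightarrow> trig_poly_in (uminus ` S) (\<lambda>t. cnj (f t))"
  by (induction rule: trig_poly_in.induct) (auto simp: cnj_circle_char intro: trig_poly_in.intros)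

lemma trig_poly_in_mult_const: "trig_poly_in S f \<Longrightarrow> trig_poly_in S (\<lambda>t. f t * c)"
proof (induction rule: trig_poly_in.induct)
  case (char k d)
  then show ?case
    using trig_poly_in.char[of k S "d * c"] by (simp add: mult_ac)
qed (auto simp: distrib_right intro: trig_poly_in.intros)

lemma trig_poly_in_mult_char:
  "trig_poly_in S f \<Longrightarrow> trig_poly_in ((+) l ` S) (\<lambda>t. f t * (c * circle_char l t))"
proof (induction rule: trig_poly_in.induct)
  case (char k d)
  then show ?case
    using trig_poly_in.char[of "l + k" "(+) l ` S" "d * c"]
    by (simp add: mult_ac circle_char_add add.commute)
qed (auto simp: distrib_right intro: trig_poly_in.intros)

lemma trig_poly_in_mult:
  assumes "trig_poly_in S f" and "trig_poly_in T g"
  shows "trig_poly_in {k + l |k l. k \<in> S \<and> l \<in> T} (\<lambda>t. f t * g t)"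
  using assms(2)
proof (induction rule: trig_poly_in.induct)
  case zero
  then show ?case by (simp add: trig_poly_in.zero)
next
  case (char l c)
  have "(+) l ` S \<subseteq> {k + l |k l. k \<in> S \<and> l \<in> T}"
    using char by (auto simp: add.commute)
  then show ?case
    using trig_poly_in_mono[OF trig_poly_in_mult_char[OF assms(1)]] by blast
next
  case (add g h)
  then show ?case
    by (simp add: distrib_left trig_poly_in.add)
qed

lemma trig_poly_in_has_integral_0:
  "trig_poly_in S f \<Longrightarrow> 0 \<notin> S \<Longrightarrow> (f has_integral 0) {0..1}"
proof (induction rule: trig_poly_in.induct)
  case zero
  show ?case by (rule has_integral_0)
next
  case (char k c)
  then show ?case
    using has_integral_mult_right[OF circle_char_has_integral_0, of k c] by auto
next
  case (add f g)
  then show ?case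
    using has_integral_add[of f 0 "{0..1}" g 0] by simp
qed

lemma norm_factor_step_sq:
  fixes a b \<beta> e :: complex and \<alpha> :: real
  assumes "cmod e = 1"
  shows "(cmod (a * \<alpha> + b * (cnj \<beta> * cnj e)))\<^sup>2 + (cmod (a * (\<beta> * e) + b * \<alpha>))\<^sup>2
    = (\<alpha>\<^sup>2 + (cmod \<beta>)\<^sup>2) * ((cmod a)\<^sup>2 + (cmod b)\<^sup>2) + 4 * \<alpha> * Re (a * cnj b * (\<beta> * e))"
    (is "?lhs = ?rhs")
proof -
  define h where "h = a * cnj b * (\<beta> * e)"
  have e: "e * cnj e = 1"
    using assms complex_norm_square[of e] by simp
  have "complex_of_real ?lhs
      = (a * \<alpha> + b * (cnj \<beta> * cnj e)) * cnj (a * \<alpha> + b * (cnj \<beta> * cnj e))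
        + (a * (\<beta> * e) + b * \<alpha>) * cnj (a * (\<beta> * e) + b * \<alpha>)"
    by (simp only: of_real_add complex_norm_square)
  also have "\<dots> = (\<alpha> * \<alpha> + \<beta> * cnj \<beta>) * (a * cnj a + b * cnj b) + 2 * \<alpha> * (h + cnj h)"
    unfolding h_def using e by simp algebra
  also have "\<dots> = complex_of_real ?rhs"
    by (simp only: h_def complex_add_cnj complex_norm_square[symmetric] power2_eq_square) simp
  finally show ?thesis
    by (simp only: of_real_eq_iff)
qed

lemma factor_step_spectrum:
  assumes a: "trig_poly_in (insert 0 {1 - M..0}) a" and b: "trig_poly_in {1..M} b"
    and "M \<le> M'" and "1 \<le> M'"
  shows "trig_poly_in (insert 0 {1 - M'..0}) (\<lambda>t. a t * \<alpha> + b t * (cnj \<beta> * circle_char (- M') t))"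
    and "trig_poly_in {1..M'} (\<lambda>t. a t * (\<beta> * circle_char M' t) + b t * \<alpha>)"
proof -
  have "trig_poly_in (insert 0 {1 - M'..0}) (\<lambda>t. a t * \<alpha>)"
    using trig_poly_in_mult_const[OF a] by (rule trig_poly_in_mono) (use assms in auto)
  moreover have "trig_poly_in (insert 0 {1 - M'..0}) (\<lambda>t. b t * (cnj \<beta> * circle_char (- M') t))"
    using trig_poly_in_mult_char[OF b] by (rule trig_poly_in_mono) (use assms in auto)
  ultimately show "trig_poly_in (insert 0 {1 - M'..0})
      (\<lambda>t. a t * \<alpha> + b t * (cnj \<beta> * circle_char (- M') t))"
    by (rule trig_poly_in.add)
  have "trig_poly_in {1..M'} (\<lambda>t. a t * (\<beta> * circle_char M' t))"
    using trig_poly_in_mult_char[OF a] by (rule trig_poly_in_mono) (use assms in auto)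
  moreover have "trig_poly_in {1..M'} (\<lambda>t. b t * \<alpha>)"
    using trig_poly_in_mult_const[OF b] by (rule trig_poly_in_mono) (use assms in auto)
  ultimately show "trig_poly_in {1..M'} (\<lambda>t. a t * (\<beta> * circle_char M' t) + b t * \<alpha>)"
    by (rule trig_poly_in.add)
qed

lemma factor_step_has_integral:
  assumes a: "(a has_integral \<mu>) {0..1}" and b: "trig_poly_in {1..M} b" and "M < M'"
  shows "((\<lambda>t. a t * \<alpha> + b t * (cnj \<beta> * circle_char (- M') t)) has_integral \<mu> * \<alpha>) {0..1}"
proof -
  have "((\<lambda>t. b t * (cnj \<beta> * circle_char (- M') t)) has_integral 0) {0..1}"
    by (rule trig_poly_in_has_integral_0[OF trig_poly_in_mult_char[OF b]]) (use assms in auto)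
  then show ?thesis
    using has_integral_add[OF has_integral_mult_left[OF a]] by fastforce
qed

lemma factor_step_energy:
  fixes \<alpha> :: real
  assumes a: "trig_poly_in (insert 0 {1 - M..0}) a" and b: "trig_poly_in {1..M} b"
    and lacunary: "2 * M \<le> M'"
    and E: "((\<lambda>t. (cmod (a t))\<^sup>2 + (cmod (b t))\<^sup>2) has_integral E) {0..1}"
  shows "((\<lambda>t. (cmod (a t * \<alpha> + b t * (cnj \<beta> * circle_char (- M') t)))\<^sup>2
              + (cmod (a t * (\<beta> * circle_char M' t) + b t * \<alpha>))\<^sup>2)
           has_integral (\<alpha>\<^sup>2 + (cmod \<beta>)\<^sup>2) * E) {0..1}"
proof -
  define h where "h t = a t * cnj (b t) * (\<beta> * circle_char M' t)" for t
  have "trig_poly_in {k + M' |k. k \<in> {k - l |k l. k \<in> insert 0 {1 - M..0} \<and> l \<in> {1..M}}} h"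
    using trig_poly_in_mult[OF trig_poly_in_mult[OF a trig_poly_in_cnj[OF b]] trig_poly_in.char]
    unfolding h_def by (rule trig_poly_in_mono) force+
  \<comment> \<open>the cross term has frequencies \<open>\<ge> M' - 2M + 1 > 0\<close>: this is where lacunarity enters\<close>
  moreover have "{k + M' |k. k \<in> {k - l |k l. k \<in> insert 0 {1 - M..0} \<and> l \<in> {1..M}}} \<subseteq> {0<..}"
    using lacunary by auto
  ultimately have "trig_poly_in {0<..} h"
    by (rule trig_poly_in_mono)
  then have "(h has_integral 0) {0..1}"
    by (rule trig_poly_in_has_integral_0) simp
  then have Re_h: "((\<lambda>t. Re (h t)) has_integral 0) {0..1}"
    using has_integral_Re[of h 0] by simp
  have "((\<lambda>t. (\<alpha>\<^sup>2 + (cmod \<beta>)\<^sup>2) * ((cmod (a t))\<^sup>2 + (cmod (b t))\<^sup>2) + 4 * \<alpha> * Re (h t))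
      has_integral (\<alpha>\<^sup>2 + (cmod \<beta>)\<^sup>2) * E) {0..1}"
    using has_integral_add[OF has_integral_mult_right[OF E] has_integral_mult_right[OF Re_h]] by simp
  moreover have "cmod (circle_char M' t) = 1" for t
    by (simp add: circle_char_def norm_exp_eq_Re)
  ultimately show ?thesis
    by (simp add: h_def norm_factor_step_sq cnj_circle_char[symmetric])
qed

lemma a_poly_0 [simp]: "a_poly A B m 0 t = 1"
  and b_poly_0 [simp]: "b_poly A B m 0 t = 0"
  by (simp_all add: a_poly_def b_poly_def mat_def)

lemma a_poly_Suc: "a_poly A B m (Suc N) t = a_poly A B m N t * A (Suc N)
    + b_poly A B m N t * (cnj (B (Suc N)) * circle_char (- int (m (Suc N))) t)"
  and b_poly_Suc: "b_poly A B m (Suc N) t = a_poly A B m N t * (B (Suc N) * circle_char (m (Suc N)) t)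
    + b_poly A B m N t * A (Suc N)"
  by (simp_all add: a_poly_def b_poly_def matrix_matrix_mult_def sum_2 factor_mat_def circle_char_def)

text \<open>Bound on the frequencies of \<open>a_poly\<close> and \<open>b_poly\<close>; \<open>N = 0\<close> is special since \<open>m 0\<close>
  does not enter the product.\<close>

definition top_freq :: "(nat \<Rightarrow> nat) \<Rightarrow> nat \<Rightarrow> int" where
  "top_freq m N = (if N = 0 then 0 else int (m N))"

lemma top_freq_Suc [simp]: "top_freq m (Suc N) = int (m (Suc N))"
  by (simp add: top_freq_def)

lemma top_freq_less_Suc:
  assumes "\<And>j. j \<ge> 1 \<Longrightarrow> m j > 0" and "\<And>j. j \<ge> 1 \<Longrightarrow> m j < m (Suc j)"
  shows "top_freq m N < top_freq m (Suc N)"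
  using assms[of "Suc N"] assms(2)[of N] by (cases N) (auto simp: top_freq_def)

lemma top_freq_lacunary:
  assumes "\<And>j. j \<ge> 1 \<Longrightarrow> m j > 0" and "\<And>j. j \<ge> 1 \<Longrightarrow> 2 * m j \<le> m (Suc j)"
  shows "2 * top_freq m N \<le> top_freq m (Suc N)"
  using assms(1)[of "Suc N"] assms(2)[of N] by (cases N) (auto simp: top_freq_def)

lemma a_b_poly_spectrum:
  assumes m_pos: "\<And>j. j \<ge> 1 \<Longrightarrow> m j > 0" and m_inc: "\<And>j. j \<ge> 1 \<Longrightarrow> m j < m (Suc j)"
  shows "trig_poly_in (insert 0 {1 - top_freq m N..0}) (a_poly A B m N)
    \<and> trig_poly_in {1..top_freq m N} (b_poly A B m N)"
proof (induction N)
  case 0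
  have "trig_poly_in (insert 0 {1 - top_freq m 0..0}) (\<lambda>t. 1 * circle_char 0 t)"
    by (intro trig_poly_in.char) simp
  then show ?case
    by (simp add: circle_char_def trig_poly_in.zero)
next
  case (Suc N)
  have "top_freq m N \<le> top_freq m (Suc N)"
    using top_freq_less_Suc[where m=m, OF m_pos m_inc] by (simp add: less_imp_le)
  moreover have "1 \<le> top_freq m (Suc N)"
    using m_pos[of "Suc N"] by simp
  ultimately show ?case
    using factor_step_spectrum[OF Suc.IH[THEN conjunct1] Suc.IH[THEN conjunct2]]
    by (simp add: a_poly_Suc b_poly_Suc)
qed

lemma a_poly_has_integral:
  assumes m_pos: "\<And>j. j \<ge> 1 \<Longrightarrow> m j > 0" and m_inc: "\<And>j. j \<ge> 1 \<Longrightarrow> m j < m (Suc j)"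
  shows "(a_poly A B m N has_integral of_real (\<Prod>j=1..N. A j)) {0..1}"
proof (induction N)
  case 0
  show ?case
    using has_integral_const_real[of "1::complex" 0 1] by simp
next
  case (Suc N)
  show ?case
    using factor_step_has_integral[OF Suc.IH a_b_poly_spectrum[where m=m, OF m_pos m_inc, THEN conjunct2]
        top_freq_less_Suc[where m=m, OF m_pos m_inc]]
    by (simp add: a_poly_Suc prod.nat_ivl_Suc' mult.commute)
qed

lemma a_b_poly_energy_has_integral:
  assumes m_pos: "\<And>j. j \<ge> 1 \<Longrightarrow> m j > 0" and m_inc: "\<And>j. j \<ge> 1 \<Longrightarrow> m j < m (Suc j)"
    and lacunary: "\<And>j. j \<ge> 1 \<Longrightarrow> 2 * m j \<le> m (Suc j)"
  shows "((\<lambda>t. (cmod (a_poly A B m N t))\<^sup>2 + (cmod (b_poly A B m N t))\<^sup>2)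
    has_integral (\<Prod>j=1..N. (A j)\<^sup>2 + (cmod (B j))\<^sup>2)) {0..1}"
proof (induction N)
  case 0
  show ?case
    using has_integral_const_real[of "1::real" 0 1] by simp
next
  case (Suc N)
  show ?case
    using factor_step_energy[OF a_b_poly_spectrum[where m=m, OF m_pos m_inc, THEN conjunct1]
        a_b_poly_spectrum[where m=m, OF m_pos m_inc, THEN conjunct2]
        top_freq_lacunary[where m=m, OF m_pos lacunary] Suc.IH]
    by (simp add: a_poly_Suc b_poly_Suc prod.nat_ivl_Suc' mult.commute)
qed

lemma has_integral_cmod_sub_real_sq:
  fixes a :: "real \<Rightarrow> complex" and g :: "real \<Rightarrow> real"
  assumes E: "((\<lambda>t. (cmod (a t))\<^sup>2 + g t) has_integral E) {0..1}"
    and mean: "(a has_integral complex_of_real P) {0..1}"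
  shows "((\<lambda>t. (cmod (a t - complex_of_real P))\<^sup>2 + g t) has_integral E - P\<^sup>2) {0..1}"
proof -
  have Re_a: "((\<lambda>t. Re (a t)) has_integral P) {0..1}"
    using has_integral_Re[OF mean] by simp
  have const: "((\<lambda>t::real. P\<^sup>2) has_integral P\<^sup>2) {0..1}"
    using has_integral_const_real[of "P\<^sup>2" 0 1] by simp
  have "((\<lambda>t. ((cmod (a t))\<^sup>2 + g t) - 2 * P * Re (a t) + P\<^sup>2) has_integral E - 2 * P * P + P\<^sup>2) {0..1}"
    by (rule has_integral_add[OF has_integral_diff[OF E has_integral_mult_right[OF Re_a]] const])
  moreover have "(cmod (z - complex_of_real P))\<^sup>2 = (cmod z)\<^sup>2 - 2 * P * Re z + P\<^sup>2" for z
    by (simp only: cmod_power2) (simp add: power2_eq_square algebra_simps)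
  then have "(\<lambda>t. (cmod (a t - complex_of_real P))\<^sup>2 + g t)
      = (\<lambda>t. ((cmod (a t))\<^sup>2 + g t) - 2 * P * Re (a t) + P\<^sup>2)"
    by (simp add: fun_eq_iff)
  moreover have "E - 2 * P * P + P\<^sup>2 = E - P\<^sup>2"
    by (simp add: power2_eq_square)
  ultimately show ?thesis
    by simp
qed

theorem lemma2p2:
  fixes m :: "nat \<Rightarrow> nat" and q :: real and A :: "nat \<Rightarrow> real" and B :: "nat \<Rightarrow> complex"
    and N :: nat
  assumes q: "q \<ge> 2"
    and m_pos: "\<And>j. j \<ge> 1 \<Longrightarrow> m j > 0"
    and m_inc: "\<And>j. j \<ge> 1 \<Longrightarrow> m j < m (Suc j)"
    and m_lac: "\<And>j. j \<ge> 1 \<Longrightarrow> real (m (Suc j)) \<ge> q * real (m j)"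
    and A_pos: "\<And>j. j \<ge> 1 \<Longrightarrow> A j > 0"
    and AB: "\<And>j. j \<ge> 1 \<Longrightarrow> (A j)\<^sup>2 - (cmod (B j))\<^sup>2 = 1"
  shows "integral {0..1} (\<lambda>t. (cmod (a_poly A B m N t))\<^sup>2 + (cmod (b_poly A B m N t))\<^sup>2)
           = (\<Prod>j=1..N. (A j)\<^sup>2 + (cmod (B j))\<^sup>2)
     \<and> integral {0..1} (\<lambda>t. (cmod (a_poly A B m N t - complex_of_real (\<Prod>j=1..N. A j)))\<^sup>2
                               + (cmod (b_poly A B m N t))\<^sup>2)
           = (\<Prod>j=1..N. (A j)\<^sup>2 + (cmod (B j))\<^sup>2) - (\<Prod>j=1..N. (A j)\<^sup>2)"
proof -
  have lacunary: "2 * m j \<le> m (Suc j)" if "j \<ge> 1" for j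
  proof -
    have "2 * real (m j) \<le> q * real (m j)"
      using q by (intro mult_right_mono) auto
    then show ?thesis
      using m_lac[OF that] by linarith
  qed
  have energy: "((\<lambda>t. (cmod (a_poly A B m N t))\<^sup>2 + (cmod (b_poly A B m N t))\<^sup>2)
      has_integral (\<Prod>j=1..N. (A j)\<^sup>2 + (cmod (B j))\<^sup>2)) {0..1}"
    by (rule a_b_poly_energy_has_integral[where m=m, OF m_pos m_inc lacunary])
  have "(\<Prod>j=1..N. A j)\<^sup>2 = (\<Prod>j=1..N. (A j)\<^sup>2)"
    by (simp add: power2_eq_square prod.distrib)
  then show ?thesis
    using integral_unique[OF energy] integral_unique[OF has_integral_cmod_sub_real_sq[OF energy
        a_poly_has_integral[where m=m, OF m_pos m_inc]]]
    by simp
qed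

end
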